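(* Assume $\eta_{\rm ch}^{\rm EES}\eta_{\rm dch}^{\rm EES}<1$ and $\eta_{\rm ch}^{\rm TES}\eta_{\rm dch}^{\rm TES}<1$. Let $X^*$ be an optimal solution of $\mathbf{P2}$ (components denoted with a superscript $*$) such that for every $t\in\mathcal T$ $$\frac{P_t^{\rm res}-P_t^{\rm curt*}}{1-\eta_{\rm ch}^{\rm EES}\eta_{\rm dch}^{\rm EES}}\;\ge\;\min\!\left(P_{\mathrm{ch},t}^{\rm EES*},\ \frac{P_{\mathrm{dch},t}^{\rm EES*}}{\eta_{\rm ch}^{\rm EES}\eta_{\rm dch}^{\rm EES}}\right).$$ Let $\widetilde X^*$ be obtained from $X^*$ by applying, at every $t\in\mathcal T$, the EES equivalent-energy-change (EEC) transform together with the replacement $P_t^{\rm curt*}\mapsto\widetilde P_t^{\rm curt*}=P_t^{\rm curt*}+\Delta P_t^{\rm EES}$, and the TES EEC transform together with the replacement $H_t^{\rm curt*}\mapsto\widetilde H_t^{\rm curt*}=H_t^{\rm curt*}+\Delta H_t^{\rm TES}$ (all other components unchanged). Then $\widetilde X^*$ is an optimal solution of $\mathbf{P1}$, and the optimal values of $\mathbf{P1}$ and $\mathbf{P2}$ coincide.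
   Context: Fix a multi-energy system (MES) and a rolling optimization horizon of periods $t\in\mathcal T=\{t_{\rm c},t_{\rm c}+1,\dots,t_{\rm e}\}$, each of length $\Delta T>0$. Given real data: electricity prices $\mu_{\mathrm{e},t}$ and gas prices $\mu_{\mathrm{g},t}$; forecast renewable (RES) output $P_t^{\mathrm{res}}\ge 0$; fixed electric and thermal loads $L_{\mathrm{e},t},L_{\mathrm{th},t}$; conversion efficiencies $\eta_{\rm ge}^{\rm CHP},\eta_{\rm gth}^{\rm CHP},\eta_{\rm gth}^{\rm GF},\eta_{\rm eth}^{\rm EB}>0$; storage efficiencies $\eta_{\rm ch}^{\rm EES},\eta_{\rm dch}^{\rm EES},\eta_{\rm ch}^{\rm TES},\eta_{\rm dch}^{\rm TES}\in(0,1]$; self-discharge rates $\alpha^{\rm EES},\alpha^{\rm TES}$; current storage energies $E_{t_{\rm c}}^{\rm EES},E_{t_{\rm c}}^{\rm TES}$; and the bounds listed below. Decision variables for each $t\in\mathcal T$: $P_t$ (power imported from the grid; $P_t<0$ means export), gas inputs $G_t^{\rm CHP},G_t^{\rm GF}$, electric boiler input $P_t^{\rm EB}$, electric storage (EES) charging/discharging powers $P_{\mathrm{ch},t}^{\rm EES},P_{\mathrm{dch},t}^{\rm EES}$, thermal storage (TES) charging/discharging amounts $H_{\mathrm{ch},t}^{\rm TES},H_{\mathrm{dch},t}^{\rm TES}$, curtailed RES power $P_t^{\rm curt}$ and curtailed heat $H_t^{\rm curt}$, shiftable loads $L_{\mathrm{e},t}^{\rm sl},L_{\mathrm{th},t}^{\rm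 sl}$. Per-period cost: $F_t=\mu_{\mathrm{e},t}P_t+\mu_{\mathrm{g},t}(G_t^{\rm CHP}+G_t^{\rm GF})$. Define $\Delta E_t^{\rm EES}=\Delta T\,(\eta_{\rm ch}^{\rm EES}P_{\mathrm{ch},t}^{\rm EES}-P_{\mathrm{dch},t}^{\rm EES}/\eta_{\rm dch}^{\rm EES})$ and $\Delta E_t^{\rm TES}=\Delta T\,(\eta_{\rm ch}^{\rm TES}H_{\mathrm{ch},t}^{\rm TES}-H_{\mathrm{dch},t}^{\rm TES}/\eta_{\rm dch}^{\rm TES})$. Constraints (for all $t\in\mathcal T$ unless stated otherwise): (C1) electric balance: $P_t+P_t^{\rm res}+\eta_{\rm ge}^{\rm CHP}G_t^{\rm CHP}-P_t^{\rm EB}+P_{\mathrm{dch},t}^{\rm EES}-P_{\mathrm{ch},t}^{\rm EES}-P_t^{\rm curt}=L_{\mathrm{e},t}^{\rm sl}+L_{\mathrm{e},t}$; (C2) thermal balance: $\eta_{\rm gth}^{\rm CHP}G_t^{\rm CHP}+\eta_{\rm gth}^{\rm GF}G_t^{\rm GF}+\eta_{\rm eth}^{\rm EB}P_t^{\rm EB}+H_{\mathrm{dch},t}^{\rm TES}-H_{\mathrm{ch},t}^{\rm TES}-H_t^{\rm curt}=L_{\mathrm{th},t}^{\rm sl}+L_{\mathrm{th},t}$; (C3) $-\overline P^{\rm out}\le P_t\le\overline P^{\rm in}$ with $\overline P^{\rm out},\overline P^{\rm in}>0$; (C4) $\underline P^{\rm CHP}\le\eta_{\rm ge}^{\rm CHP}G_t^{\rm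 CHP}\le\overline P^{\rm CHP}$, $\underline P^{\rm GF}\le\eta_{\rm gth}^{\rm GF}G_t^{\rm GF}\le\overline P^{\rm GF}$, $\underline P^{\rm EB}\le P_t^{\rm EB}\le\overline P^{\rm EB}$; (C5) ramping, for $t,t+1\in\mathcal T$: $|\eta_{\rm ge}^{\rm CHP}(G_{t+1}^{\rm CHP}-G_t^{\rm CHP})|\le\Delta P^{\rm CHP}$, $|P_{t+1}^{\rm EB}-P_t^{\rm EB}|\le\Delta P^{\rm EB}$; (C6) $0\le P_{\mathrm{ch},t}^{\rm EES}\le\overline P_{\rm ch}^{\rm EES}$, $0\le P_{\mathrm{dch},t}^{\rm EES}\le\overline P_{\rm dch}^{\rm EES}$, $0\le H_{\mathrm{ch},t}^{\rm TES}\le\overline H_{\rm ch}^{\rm TES}$, $0\le H_{\mathrm{dch},t}^{\rm TES}\le\overline H_{\rm dch}^{\rm TES}$; (C7) complementarity: $P_{\mathrm{ch},t}^{\rm EES}P_{\mathrm{dch},t}^{\rm EES}=0$ and $H_{\mathrm{ch},t}^{\rm TES}H_{\mathrm{dch},t}^{\rm TES}=0$; (C8) shiftable loads, for given subsets $\Omega_{\rm e},\Omega_{\rm th}$ of periods and given totals/upper limits: $\sum_{t\in\Omega_{\rm e}}L_{\mathrm{e},t}^{\rm sl}=L_{\rm e}^{\rm sl}$, $0\le L_{\mathrm{e},t}^{\rm sl}\le\overline L_{\rm e}^{\rm sl}$ for $t\in\Omega_{\rm e}$; $\sum_{t\in\Omega_{\rm th}}L_{\mathrm{th},t}^{\rm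 sl}=L_{\rm th}^{\rm sl}$, $0\le L_{\mathrm{th},t}^{\rm sl}\le\overline L_{\rm th}^{\rm sl}$ for $t\in\Omega_{\rm th}$; (C9) $0\le P_t^{\rm curt}\le P_t^{\rm res}$ and $0\le H_t^{\rm curt}$; (C10) energy bounds: $\underline E^{\rm EES}\le(1-\alpha^{\rm EES})E_{t_{\rm c}}^{\rm EES}+\sum_{\tau=t_{\rm c}}^{t}\Delta E_\tau^{\rm EES}\le\overline E^{\rm EES}$ and $\underline E^{\rm TES}\le(1-\alpha^{\rm TES})E_{t_{\rm c}}^{\rm TES}+\sum_{\tau=t_{\rm c}}^{t}\Delta E_\tau^{\rm TES}\le\overline E^{\rm TES}$; (C11) target energy: $E_{t_{\rm c}}^{\rm EES}+\sum_{\tau=t_{\rm c}}^{t_{\rm e}}\Delta E_\tau^{\rm EES}=E_{\rm targ}^{\rm EES}$ and $E_{t_{\rm c}}^{\rm TES}+\sum_{\tau=t_{\rm c}}^{t_{\rm e}}\Delta E_\tau^{\rm TES}=E_{\rm targ}^{\rm TES}$. Problem $\mathbf{P1}$: minimize $\sum_{t\in\mathcal T}F_t$ subject to (C1)–(C11). Problem $\mathbf{P2}$ (the relaxation): minimize $\sum_{t\in\mathcal T}F_t$ subject to (C1)–(C6) and (C8)–(C11), i.e. $\mathbf{P1}$ with the complementarity constraints (C7) removed; $\mathbf{P2}$ is a linear program. EEC transform for the EES at period $t$: given $(P_{\mathrm{ch},t}^{\rm EES*},P_{\mathrm{dch},t}^{\rm EES*})$ with energy change $\Delta E_t^{\rm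 EES*}$ (computed by the formula above), set $(\widetilde P_{\mathrm{ch},t}^{\rm EES*},\widetilde P_{\mathrm{dch},t}^{\rm EES*})=\big(\Delta E_t^{\rm EES*}/(\eta_{\rm ch}^{\rm EES}\Delta T),\,0\big)$ if $\Delta E_t^{\rm EES*}\ge0$, and $=\big(0,\,-\Delta E_t^{\rm EES*}\eta_{\rm dch}^{\rm EES}/\Delta T\big)$ if $\Delta E_t^{\rm EES*}<0$; and let $\Delta P_t^{\rm EES}=(\widetilde P_{\mathrm{dch},t}^{\rm EES*}-\widetilde P_{\mathrm{ch},t}^{\rm EES*})-(P_{\mathrm{dch},t}^{\rm EES*}-P_{\mathrm{ch},t}^{\rm EES*})$ be the resulting change of net discharge power. The TES EEC transform is defined identically with $H_{\mathrm{ch},t}^{\rm TES*},H_{\mathrm{dch},t}^{\rm TES*},\Delta E_t^{\rm TES*},\eta_{\rm ch}^{\rm TES},\eta_{\rm dch}^{\rm TES}$ in place of the EES quantities, producing $\widetilde H_{\mathrm{ch},t}^{\rm TES*},\widetilde H_{\mathrm{dch},t}^{\rm TES*}$, with $\Delta H_t^{\rm TES}=(\widetilde H_{\mathrm{dch},t}^{\rm TES*}-\widetilde H_{\mathrm{ch},t}^{\rm TES*})-(H_{\mathrm{dch},t}^{\rm TES*}-H_{\mathrm{ch},t}^{\rm TES*})$. *)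

theory Defs
  imports Complex_Main
begin

record mes_params =
  dT :: real
  mu_e :: "nat \<Rightarrow> real"
  mu_g :: "nat \<Rightarrow> real"
  Pres :: "nat \<Rightarrow> real"
  Le :: "nat \<Rightarrow> real"
  Lth :: "nat \<Rightarrow> real"
  eta_ge_chp :: real
  eta_gth_chp :: real
  eta_gth_gf :: real
  eta_eth_eb :: real
  eta_ch_ees :: real
  eta_dch_ees :: real
  eta_ch_tes :: real
  eta_dch_tes :: real
  alpha_ees :: real
  alpha_tes :: real
  E0_ees :: real
  E0_tes :: real
  Pout_max :: real
  Pin_max :: real
  Pchp_min :: real
  Pchp_max :: real
  Pgf_min :: real
  Pgf_max :: real
  Peb_min :: real
  Peb_max :: real
  dPchp :: real
  dPeb :: real
  Pch_ees_max :: real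
  Pdch_ees_max :: real
  Hch_tes_max :: real
  Hdch_tes_max :: real
  Omega_e :: "nat set"
  Omega_th :: "nat set"
  Lsl_e_tot :: real
  Lsl_e_max :: real
  Lsl_th_tot :: real
  Lsl_th_max :: real
  Emin_ees :: real
  Emax_ees :: real
  Emin_tes :: real
  Emax_tes :: real
  Etarg_ees :: real
  Etarg_tes :: real
  tc :: nat
  te :: nat

record mes_sol =
  Pgrid :: "nat \<Rightarrow> real"
  Gchp :: "nat \<Rightarrow> real"
  Ggf :: "nat \<Rightarrow> real"
  Peb :: "nat \<Rightarrow> real"
  Pch :: "nat \<Rightarrow> real"
  Pdch :: "nat \<Rightarrow> real"
  Hch :: "nat \<Rightarrow> real"
  Hdch :: "nat \<Rightarrow> real"
  Pcurt :: "nat \<Rightarrow> real"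
  Hcurt :: "nat \<Rightarrow> real"
  Lsl_e :: "nat \<Rightarrow> real"
  Lsl_th :: "nat \<Rightarrow> real"

definition horizon :: "mes_params \<Rightarrow> nat set" where
  "horizon p = {tc p..te p}"

definition params_ok :: "mes_params \<Rightarrow> bool" where
  "params_ok p \<longleftrightarrow>
     tc p \<le> te p \<and> dT p > 0 \<and>
     (\<forall>t\<in>horizon p. Pres p t \<ge> 0) \<and>
     eta_ge_chp p > 0 \<and> eta_gth_chp p > 0 \<and> eta_gth_gf p > 0 \<and> eta_eth_eb p > 0 \<and>
     0 < eta_ch_ees p \<and> eta_ch_ees p \<le> 1 \<and> 0 < eta_dch_ees p \<and> eta_dch_ees p \<le> 1 \<and>
     0 < eta_ch_tes p \<and> eta_ch_tes p \<le> 1 \<and> 0 < eta_dch_tes p \<and> eta_dch_tes p \<le> 1 \<and>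
     Pout_max p > 0 \<and> Pin_max p > 0 \<and>
     Omega_e p \<subseteq> horizon p \<and> Omega_th p \<subseteq> horizon p"

definition dE_ees :: "mes_params \<Rightarrow> mes_sol \<Rightarrow> nat \<Rightarrow> real" where
  "dE_ees p X t = dT p * (eta_ch_ees p * Pch X t - Pdch X t / eta_dch_ees p)"

definition dE_tes :: "mes_params \<Rightarrow> mes_sol \<Rightarrow> nat \<Rightarrow> real" where
  "dE_tes p X t = dT p * (eta_ch_tes p * Hch X t - Hdch X t / eta_dch_tes p)"

definition cost :: "mes_params \<Rightarrow> mes_sol \<Rightarrow> real" where
  "cost p X = (\<Sum>t\<in>horizon p. mu_e p t * Pgrid X t + mu_g p t * (Gchp X t + Ggf X t))"

definition feasible_P2 :: "mes_params \<Rightarrow> mes_sol \<Rightarrow> bool" where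
  "feasible_P2 p X \<longleftrightarrow>
    (\<forall>t\<in>horizon p.
       \<comment> \<open>C1\<close>
       Pgrid X t + Pres p t + eta_ge_chp p * Gchp X t - Peb X t + Pdch X t - Pch X t - Pcurt X t
         = Lsl_e X t + Le p t \<and>
       \<comment> \<open>C2\<close>
       eta_gth_chp p * Gchp X t + eta_gth_gf p * Ggf X t + eta_eth_eb p * Peb X t
         + Hdch X t - Hch X t - Hcurt X t = Lsl_th X t + Lth p t \<and>
       \<comment> \<open>C3\<close>
       - Pout_max p \<le> Pgrid X t \<and> Pgrid X t \<le> Pin_max p \<and>
       \<comment> \<open>C4\<close>
       Pchp_min p \<le> eta_ge_chp p * Gchp X t \<and> eta_ge_chp p * Gchp X t \<le> Pchp_max p \<and>
       Pgf_min p \<le> eta_gth_gf p * Ggf X t \<and> eta_gth_gf p * Ggf X t \<le> Pgf_max p \<and>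
       Peb_min p \<le> Peb X t \<and> Peb X t \<le> Peb_max p \<and>
       \<comment> \<open>C6\<close>
       0 \<le> Pch X t \<and> Pch X t \<le> Pch_ees_max p \<and> 0 \<le> Pdch X t \<and> Pdch X t \<le> Pdch_ees_max p \<and>
       0 \<le> Hch X t \<and> Hch X t \<le> Hch_tes_max p \<and> 0 \<le> Hdch X t \<and> Hdch X t \<le> Hdch_tes_max p \<and>
       \<comment> \<open>C9\<close>
       0 \<le> Pcurt X t \<and> Pcurt X t \<le> Pres p t \<and> 0 \<le> Hcurt X t \<and>
       \<comment> \<open>C10\<close>
       Emin_ees p \<le> (1 - alpha_ees p) * E0_ees p + (\<Sum>\<tau>\<in>{tc p..t}. dE_ees p X \<tau>) \<and>
       (1 - alpha_ees p) * E0_ees p + (\<Sum>\<tau>\<in>{tc p..t}. dE_ees p X \<tau>) \<le> Emax_ees p \<and>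
       Emin_tes p \<le> (1 - alpha_tes p) * E0_tes p + (\<Sum>\<tau>\<in>{tc p..t}. dE_tes p X \<tau>) \<and>
       (1 - alpha_tes p) * E0_tes p + (\<Sum>\<tau>\<in>{tc p..t}. dE_tes p X \<tau>) \<le> Emax_tes p) \<and>
    \<comment> \<open>C5 (ramping), for t, t+1 in the horizon\<close>
    (\<forall>t. t \<in> horizon p \<and> t + 1 \<in> horizon p \<longrightarrow>
       \<bar>eta_ge_chp p * (Gchp X (t + 1) - Gchp X t)\<bar> \<le> dPchp p \<and>
       \<bar>Peb X (t + 1) - Peb X t\<bar> \<le> dPeb p) \<and>
    \<comment> \<open>C8 (shiftable loads)\<close>
    (\<Sum>t\<in>Omega_e p. Lsl_e X t) = Lsl_e_tot p \<and>
    (\<forall>t\<in>Omega_e p. 0 \<le> Lsl_e X t \<and> Lsl_e X t \<le> Lsl_e_max p) \<and>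
    (\<Sum>t\<in>Omega_th p. Lsl_th X t) = Lsl_th_tot p \<and>
    (\<forall>t\<in>Omega_th p. 0 \<le> Lsl_th X t \<and> Lsl_th X t \<le> Lsl_th_max p) \<and>
    \<comment> \<open>C11 (target energy)\<close>
    E0_ees p + (\<Sum>\<tau>\<in>horizon p. dE_ees p X \<tau>) = Etarg_ees p \<and>
    E0_tes p + (\<Sum>\<tau>\<in>horizon p. dE_tes p X \<tau>) = Etarg_tes p"

definition complementary :: "mes_params \<Rightarrow> mes_sol \<Rightarrow> bool" where
  "complementary p X \<longleftrightarrow>
    (\<forall>t\<in>horizon p. Pch X t * Pdch X t = 0 \<and> Hch X t * Hdch X t = 0)"

definition feasible_P1 :: "mes_params \<Rightarrow> mes_sol \<Rightarrow> bool" where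
  "feasible_P1 p X \<longleftrightarrow> feasible_P2 p X \<and> complementary p X"

definition optimal_P1 :: "mes_params \<Rightarrow> mes_sol \<Rightarrow> bool" where
  "optimal_P1 p X \<longleftrightarrow> feasible_P1 p X \<and> (\<forall>Y. feasible_P1 p Y \<longrightarrow> cost p X \<le> cost p Y)"

definition optimal_P2 :: "mes_params \<Rightarrow> mes_sol \<Rightarrow> bool" where
  "optimal_P2 p X \<longleftrightarrow> feasible_P2 p X \<and> (\<forall>Y. feasible_P2 p Y \<longrightarrow> cost p X \<le> cost p Y)"

definition opt_value_P1 :: "mes_params \<Rightarrow> real" where
  "opt_value_P1 p = (INF Y\<in>{Y. feasible_P1 p Y}. cost p Y)"

definition opt_value_P2 :: "mes_params \<Rightarrow> real" where
  "opt_value_P2 p = (INF Y\<in>{Y. feasible_P2 p Y}. cost p Y)"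

definition eec :: "real \<Rightarrow> real \<Rightarrow> real \<Rightarrow> real \<Rightarrow> real \<Rightarrow> real \<times> real" where
  "eec dt ec ed ch dch =
     (let dE = dt * (ec * ch - dch / ed) in
      if dE \<ge> 0 then (dE / (ec * dt), 0) else (0, - dE * ed / dt))"

definition eec_ees :: "mes_params \<Rightarrow> mes_sol \<Rightarrow> nat \<Rightarrow> real \<times> real" where
  "eec_ees p X t = eec (dT p) (eta_ch_ees p) (eta_dch_ees p) (Pch X t) (Pdch X t)"

definition eec_tes :: "mes_params \<Rightarrow> mes_sol \<Rightarrow> nat \<Rightarrow> real \<times> real" where
  "eec_tes p X t = eec (dT p) (eta_ch_tes p) (eta_dch_tes p) (Hch X t) (Hdch X t)"

definition dP_ees :: "mes_params \<Rightarrow> mes_sol \<Rightarrow> nat \<Rightarrow> real" where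
  "dP_ees p X t = (snd (eec_ees p X t) - fst (eec_ees p X t)) - (Pdch X t - Pch X t)"

definition dH_tes :: "mes_params \<Rightarrow> mes_sol \<Rightarrow> nat \<Rightarrow> real" where
  "dH_tes p X t = (snd (eec_tes p X t) - fst (eec_tes p X t)) - (Hdch X t - Hch X t)"

definition eec_transform :: "mes_params \<Rightarrow> mes_sol \<Rightarrow> mes_sol" where
  "eec_transform p X = X\<lparr>
     Pch := (\<lambda>t. fst (eec_ees p X t)),
     Pdch := (\<lambda>t. snd (eec_ees p X t)),
     Pcurt := (\<lambda>t. Pcurt X t + dP_ees p X t),
     Hch := (\<lambda>t. fst (eec_tes p X t)),
     Hdch := (\<lambda>t. snd (eec_tes p X t)),
     Hcurt := (\<lambda>t. Hcurt X t + dH_tes p X t)\<rparr>"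

end

theory Submission imports Defs begin

text \<open>The EEC transform keeps the energy change of each storage unit in every period, so
  constraints (C10), (C11) and the cost are untouched, and it makes charging and discharging
  complementary. It only moves the lossy round-trip part of simultaneous charging and
  discharging into curtailment: the net discharge grows by exactly
  \<open>(1 - \<eta>\<^sub>c\<^sub>h \<eta>\<^sub>d\<^sub>c\<^sub>h) min(ch, dch / (\<eta>\<^sub>c\<^sub>h \<eta>\<^sub>d\<^sub>c\<^sub>h))\<close>, which is non-negative. For heat curtailment
  only non-negativity is required.
  The transformed point is therefore feasible for P1 with the cost of an optimum of the
  relaxation P2, so it is optimal for P1 and both optimal values coincide.\<close>

lemma eec_nonneg:
  assumes "dt > 0" "ec > 0" "ed > 0" "ch \<ge> 0" "dch \<ge> 0"
  shows "fst (eec dt ec ed ch dch) \<ge> 0" "snd (eec dt ec ed ch dch) \<ge> 0"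
  using assms by (auto simp: eec_def Let_def field_simps)

lemma eec_le:
  assumes "dt > 0" "ec > 0" "ed > 0" "ch \<ge> 0" "dch \<ge> 0"
  shows "fst (eec dt ec ed ch dch) \<le> ch" "snd (eec dt ec ed ch dch) \<le> dch"
  using assms by (auto simp: eec_def Let_def field_simps)

lemma eec_complementary: "fst (eec dt ec ed ch dch) * snd (eec dt ec ed ch dch) = 0"
  by (simp add: eec_def Let_def)

lemma eec_energy_change:
  assumes "dt > 0" "ec > 0" "ed > 0"
  shows "dt * (ec * fst (eec dt ec ed ch dch) - snd (eec dt ec ed ch dch) / ed)
           = dt * (ec * ch - dch / ed)"
  using assms by (auto simp: eec_def Let_def field_simps)

lemma eec_net_discharge_gain:
  assumes "dt > 0" "ec > 0" "ed > 0"
  shows "(snd (eec dt ec ed ch dch) - fst (eec dt ec ed ch dch)) - (dch - ch)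
           = (1 - ec * ed) * min ch (dch / (ec * ed))"
proof (cases "dt * (ec * ch - dch / ed) \<ge> 0")
  case True
  then have "dch / (ec * ed) \<le> ch"
    using assms by (simp add: zero_le_mult_iff field_simps)
  then show ?thesis
    using True assms by (simp add: eec_def Let_def min_def field_simps)
next
  case False
  then have "ch \<le> dch / (ec * ed)"
    using assms by (simp add: zero_le_mult_iff field_simps)
  then show ?thesis
    using False assms by (simp add: eec_def Let_def min_def field_simps)
qed

lemma eec_net_discharge_gain_nonneg:
  assumes "dt > 0" "ec > 0" "ed > 0" "ec * ed \<le> 1" "ch \<ge> 0" "dch \<ge> 0"
  shows "(snd (eec dt ec ed ch dch) - fst (eec dt ec ed ch dch)) - (dch - ch) \<ge> 0"
  unfolding eec_net_discharge_gain[OF assms(1-3)] using assms by simp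

lemma optimal_restriction_of_relaxation:
  fixes c :: "'a \<Rightarrow> real"
  assumes restr: "\<And>z. A z \<Longrightarrow> B z"
    and x_opt: "B x" "\<And>z. B z \<Longrightarrow> c x \<le> c z"
    and y: "A y" "c y = c x"
  shows "\<forall>z. A z \<longrightarrow> c y \<le> c z"
    and "(INF z\<in>{z. A z}. c z) = (INF z\<in>{z. B z}. c z)"
proof -
  show y_opt: "\<forall>z. A z \<longrightarrow> c y \<le> c z"
    using restr x_opt y by auto
  have "(INF z\<in>{z. A z}. c z) = c y"
    using y y_opt by (intro cInf_eq_minimum) (auto intro!: image_eqI[of _ c y])
  also have "\<dots> = (INF z\<in>{z. B z}. c z)"
    using x_opt y by (intro cInf_eq_minimum[symmetric]) auto
  finally show "(INF z\<in>{z. A z}. c z) = (INF z\<in>{z. B z}. c z)" .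
qed

lemma eec_transform_unchanged:
  "Pgrid (eec_transform p X) = Pgrid X" "Gchp (eec_transform p X) = Gchp X"
  "Ggf (eec_transform p X) = Ggf X" "Peb (eec_transform p X) = Peb X"
  "Lsl_e (eec_transform p X) = Lsl_e X" "Lsl_th (eec_transform p X) = Lsl_th X"
  by (simp_all add: eec_transform_def)

lemma eec_transform_net_balance:
  "Pdch (eec_transform p X) t - Pch (eec_transform p X) t - Pcurt (eec_transform p X) t
     = Pdch X t - Pch X t - Pcurt X t"
  "Hdch (eec_transform p X) t - Hch (eec_transform p X) t - Hcurt (eec_transform p X) t
     = Hdch X t - Hch X t - Hcurt X t"
  by (simp_all add: eec_transform_def dP_ees_def dH_tes_def)

lemma cost_eec_transform: "cost p (eec_transform p X) = cost p X"
  by (simp add: cost_def eec_transform_unchanged)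

lemma complementary_eec_transform: "complementary p (eec_transform p X)"
  by (simp add: complementary_def eec_transform_def eec_ees_def eec_tes_def eec_complementary)

lemma dE_ees_eec_transform:
  assumes "params_ok p"
  shows "dE_ees p (eec_transform p X) = dE_ees p X"
  using assms eec_energy_change
  by (auto simp: fun_eq_iff params_ok_def dE_ees_def eec_transform_def eec_ees_def)

lemma dE_tes_eec_transform:
  assumes "params_ok p"
  shows "dE_tes p (eec_transform p X) = dE_tes p X"
  using assms eec_energy_change
  by (auto simp: fun_eq_iff params_ok_def dE_tes_def eec_transform_def eec_tes_def)

lemma dP_ees_eq:
  assumes "params_ok p"
  shows "dP_ees p X t
           = (1 - eta_ch_ees p * eta_dch_ees p) * min (Pch X t) (Pdch X t / (eta_ch_ees p * eta_dch_ees p))"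
  using assms eec_net_discharge_gain
  by (simp add: params_ok_def dP_ees_def eec_ees_def)

lemma eec_transform_bounds:
  assumes ok: "params_ok p" and feas: "feasible_P2 p X" and t: "t \<in> horizon p"
    and headroom: "dP_ees p X t \<le> Pres p t - Pcurt X t"
  defines "Y \<equiv> eec_transform p X"
  shows "0 \<le> Pch Y t \<and> Pch Y t \<le> Pch_ees_max p \<and> 0 \<le> Pdch Y t \<and> Pdch Y t \<le> Pdch_ees_max p \<and>
       0 \<le> Hch Y t \<and> Hch Y t \<le> Hch_tes_max p \<and> 0 \<le> Hdch Y t \<and> Hdch Y t \<le> Hdch_tes_max p \<and>
       0 \<le> Pcurt Y t \<and> Pcurt Y t \<le> Pres p t \<and> 0 \<le> Hcurt Y t"
proof -
  have eta: "dT p > 0" "eta_ch_ees p > 0" "eta_dch_ees p > 0" "eta_ch_tes p > 0" "eta_dch_tes p > 0"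
    "eta_ch_ees p * eta_dch_ees p \<le> 1" "eta_ch_tes p * eta_dch_tes p \<le> 1"
    using ok by (auto simp: params_ok_def mult_le_one)
  have Xt: "0 \<le> Pch X t" "Pch X t \<le> Pch_ees_max p" "0 \<le> Pdch X t" "Pdch X t \<le> Pdch_ees_max p"
     "0 \<le> Hch X t" "Hch X t \<le> Hch_tes_max p" "0 \<le> Hdch X t" "Hdch X t \<le> Hdch_tes_max p"
     "0 \<le> Pcurt X t" "0 \<le> Hcurt X t"
    using feas t unfolding feasible_P2_def by blast+
  note ees = eec_nonneg[OF eta(1-3) Xt(1,3)] eec_le[OF eta(1-3) Xt(1,3)]
    eec_net_discharge_gain_nonneg[OF eta(1-3,6) Xt(1,3)]
  note tes = eec_nonneg[OF eta(1,4,5) Xt(5,7)] eec_le[OF eta(1,4,5) Xt(5,7)]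
    eec_net_discharge_gain_nonneg[OF eta(1,4,5,7) Xt(5,7)]
  show ?thesis
    using Xt ees tes headroom
    by (auto simp: Y_def eec_transform_def dP_ees_def dH_tes_def eec_ees_def eec_tes_def)
qed

lemma feasible_P2_eec_transform:
  assumes ok: "params_ok p" and feas: "feasible_P2 p X"
    and headroom: "\<forall>t\<in>horizon p. dP_ees p X t \<le> Pres p t - Pcurt X t"
  shows "feasible_P2 p (eec_transform p X)"
  using feas eec_transform_bounds[OF ok feas] headroom eec_transform_net_balance[of p X]
  unfolding feasible_P2_def dE_ees_eec_transform[OF ok] dE_tes_eec_transform[OF ok]
    eec_transform_unchanged
  by (smt (verit))

theorem theorem2:
  assumes "params_ok p"
    and "eta_ch_ees p * eta_dch_ees p < 1"
    and "eta_ch_tes p * eta_dch_tes p < 1"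
    and "optimal_P2 p X"
    and "\<forall>t\<in>horizon p.
           (Pres p t - Pcurt X t) / (1 - eta_ch_ees p * eta_dch_ees p)
             \<ge> min (Pch X t) (Pdch X t / (eta_ch_ees p * eta_dch_ees p))"
  shows "optimal_P1 p (eec_transform p X) \<and> opt_value_P1 p = opt_value_P2 p"
proof -
  have headroom: "\<forall>t\<in>horizon p. dP_ees p X t \<le> Pres p t - Pcurt X t"
    using assms(2,5) by (simp add: dP_ees_eq[OF assms(1)] le_divide_eq mult.commute)
  have X_opt: "feasible_P2 p X" "\<And>Z. feasible_P2 p Z \<Longrightarrow> cost p X \<le> cost p Z"
    using assms(4) by (auto simp: optimal_P2_def)
  have "feasible_P1 p (eec_transform p X)"
    using feasible_P2_eec_transform[OF assms(1) X_opt(1) headroom] complementary_eec_transform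
    by (simp add: feasible_P1_def)
  note relaxation = optimal_restriction_of_relaxation[of "feasible_P1 p" "feasible_P2 p",
      OF _ X_opt this cost_eec_transform]
  show ?thesis
    using relaxation \<open>feasible_P1 p (eec_transform p X)\<close>
    by (auto simp: feasible_P1_def optimal_P1_def opt_value_P1_def opt_value_P2_def)
qed

end
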